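(* Let $(A,\cdot_A,a_A)$ be a left-symmetric algebroid and $H\in\Gamma(\mathrm{Sym}^2(A))$ nondegenerate, i.e. $H^\sharp:A^*\to A$ is an isomorphism. Let $H^{-1}\in\Gamma(\mathrm{Sym}^2(A^* ))$ be the symmetric form corresponding to $(H^\sharp)^{-1}$, i.e. $H^{-1}(x,y)=\langle (H^\sharp)^{-1}x,y\rangle$, regarded as an element of $C^2(A)=\Gamma(A^*\otimes A^* )$. Then $\llbracket H,H\rrbracket=0$ if and only if $\delta(H^{-1})=0$.
   Context: A left-symmetric algebroid is a vector bundle $A\to M$ with an $\mathbb R$-bilinear multiplication $\cdot_A$ on $\Gamma(A)$ with $x\cdot_A(y\cdot_Az)-(x\cdot_Ay)\cdot_Az$ symmetric in $x,y$, and an anchor $a_A:A\to TM$ with $x\cdot_A(fy)=f(x\cdot_Ay)+a_A(x)(f)y$, $(fx)\cdot_Ay=f(x\cdot_Ay)$; $[x,y]_A=x\cdot_Ay-y\cdot_Ax$. For $\varphi\in C^2(A)=\Gamma(A^*\otimes A^* )$, $\delta\varphi(x_1,x_2,x_3)=a_A(x_1)\varphi(x_2,x_3)-a_A(x_2)\varphi(x_1,x_3)-\varphi(x_2,x_1\cdot_Ax_3)+\varphi(x_1,x_2\cdot_Ax_3)-\varphi([x_1,x_2]_A,x_3)$. $\mathrm{Sym}^2(A)$ is the bundle of symmetric elements of $A\otimes A$; for $H\in\Gamma(\mathrm{Sym}^2(A))$, $H^\sharp:A^*\to A$ is $\langle H^\sharp(\xi),\eta\rangle=H(\xi,\eta)$,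 and $\llbracket H,H\rrbracket\in\Gamma(\wedge^2A\otimes A)$ is $\llbracket H,H\rrbracket(\xi_1,\xi_2,\xi_3)=a_A(H^\sharp\xi_1)\langle H^\sharp\xi_2,\xi_3\rangle-a_A(H^\sharp\xi_2)\langle H^\sharp\xi_1,\xi_3\rangle+\langle\xi_1,H^\sharp\xi_2\cdot_AH^\sharp\xi_3\rangle-\langle\xi_2,H^\sharp\xi_1\cdot_AH^\sharp\xi_3\rangle-\langle\xi_3,[H^\sharp\xi_1,H^\sharp\xi_2]_A\rangle$. *)

theory Defs
  imports Complex_Main
begin

text \<open>Algebraic (Lie--Rinehart style) model of a vector bundle A over M:
  'r plays the role of the ring C^infinity(M) (a commutative real algebra),
  'x plays the role of the space of sections Gamma(A), with the
  C^infinity(M)-module structure given by the scalar multiplication sm.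
  Sections of the dual bundle, Gamma(A^*), are the C^infinity(M)-linear
  functionals on Gamma(A); the pairing <xi, x> is the application xi x.\<close>

definition C_module :: "('r::comm_ring_1 \<Rightarrow> 'x::ab_group_add \<Rightarrow> 'x) \<Rightarrow> bool" where
  "C_module sm \<longleftrightarrow>
     (\<forall>f g x. sm (f + g) x = sm f x + sm g x) \<and>
     (\<forall>f x y. sm f (x + y) = sm f x + sm f y) \<and>
     (\<forall>f g x. sm (f * g) x = sm f (sm g x)) \<and>
     (\<forall>x. sm 1 x = x)"

definition dual_sections :: "('r::comm_ring_1 \<Rightarrow> 'x::ab_group_add \<Rightarrow> 'x) \<Rightarrow> ('x \<Rightarrow> 'r) set" where
  "dual_sections sm = {\<xi>. (\<forall>x y. \<xi> (x + y) = \<xi> x + \<xi> y) \<and> (\<forall>f x. \<xi> (sm f x) = f * \<xi> x)}"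

definition is_vector_field :: "('r::{comm_ring_1,real_algebra_1} \<Rightarrow> 'r) \<Rightarrow> bool" where
  "is_vector_field D \<longleftrightarrow>
     (\<forall>f g. D (f + g) = D f + D g) \<and>
     (\<forall>c f. D (of_real c * f) = of_real c * D f) \<and>
     (\<forall>f g. D (f * g) = f * D g + D f * g)"

definition left_symmetric_algebroid ::
  "('r::{comm_ring_1,real_algebra_1} \<Rightarrow> 'x::ab_group_add \<Rightarrow> 'x) \<Rightarrow> ('x \<Rightarrow> 'x \<Rightarrow> 'x) \<Rightarrow> ('x \<Rightarrow> 'r \<Rightarrow> 'r) \<Rightarrow> bool" where
  "left_symmetric_algebroid sm mult a \<longleftrightarrow>
     C_module sm \<and>
     \<comment> \<open>anchor: a bundle map A \<rightarrow> TM, i.e. C-linear from sections to vector fields\<close>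
     (\<forall>x. is_vector_field (a x)) \<and>
     (\<forall>x y g. a (x + y) g = a x g + a y g) \<and>
     (\<forall>f x g. a (sm f x) g = f * a x g) \<and>
     \<comment> \<open>R-bilinearity of the multiplication\<close>
     (\<forall>x y z. mult (x + y) z = mult x z + mult y z) \<and>
     (\<forall>x y z. mult x (y + z) = mult x y + mult x z) \<and>
     (\<forall>c x y. mult (sm (of_real c) x) y = sm (of_real c) (mult x y)) \<and>
     (\<forall>c x y. mult x (sm (of_real c) y) = sm (of_real c) (mult x y)) \<and>
     \<comment> \<open>left-symmetry: associator symmetric in the first two arguments\<close>
     (\<forall>x y z. mult x (mult y z) - mult (mult x y) z = mult y (mult x z) - mult (mult y x) z) \<and>
     \<comment> \<open>Leibniz rule and C-linearity in the first argument\<close>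
     (\<forall>x f y. mult x (sm f y) = sm f (mult x y) + sm (a x f) y) \<and>
     (\<forall>f x y. mult (sm f x) y = sm f (mult x y))"

definition lsa_bracket :: "('x::ab_group_add \<Rightarrow> 'x \<Rightarrow> 'x) \<Rightarrow> 'x \<Rightarrow> 'x \<Rightarrow> 'x" where
  "lsa_bracket mult x y = mult x y - mult y x"

definition lsa_delta2 ::
  "('x::ab_group_add \<Rightarrow> 'x \<Rightarrow> 'x) \<Rightarrow> ('x \<Rightarrow> 'r::comm_ring_1 \<Rightarrow> 'r) \<Rightarrow> ('x \<Rightarrow> 'x \<Rightarrow> 'r) \<Rightarrow> 'x \<Rightarrow> 'x \<Rightarrow> 'x \<Rightarrow> 'r" where
  "lsa_delta2 mult a \<phi> x1 x2 x3 =
     a x1 (\<phi> x2 x3) - a x2 (\<phi> x1 x3) - \<phi> x2 (mult x1 x3) + \<phi> x1 (mult x2 x3)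
     - \<phi> (lsa_bracket mult x1 x2) x3"

definition sym2_section ::
  "('r::comm_ring_1 \<Rightarrow> 'x::ab_group_add \<Rightarrow> 'x) \<Rightarrow> (('x \<Rightarrow> 'r) \<Rightarrow> ('x \<Rightarrow> 'r) \<Rightarrow> 'r) \<Rightarrow> bool" where
  "sym2_section sm H \<longleftrightarrow>
     (\<forall>\<xi>\<in>dual_sections sm. \<forall>\<eta>\<in>dual_sections sm. H \<xi> \<eta> = H \<eta> \<xi>) \<and>
     (\<forall>\<xi>\<in>dual_sections sm. \<forall>\<eta>\<in>dual_sections sm. \<forall>\<zeta>\<in>dual_sections sm.
        H (\<lambda>x. \<xi> x + \<eta> x) \<zeta> = H \<xi> \<zeta> + H \<eta> \<zeta>) \<and>
     (\<forall>f. \<forall>\<xi>\<in>dual_sections sm. \<forall>\<eta>\<in>dual_sections sm. H (\<lambda>x. f * \<xi> x) \<eta> = f * H \<xi> \<eta>)"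

definition is_sharp ::
  "('r::comm_ring_1 \<Rightarrow> 'x::ab_group_add \<Rightarrow> 'x) \<Rightarrow> (('x \<Rightarrow> 'r) \<Rightarrow> ('x \<Rightarrow> 'r) \<Rightarrow> 'r) \<Rightarrow> (('x \<Rightarrow> 'r) \<Rightarrow> 'x) \<Rightarrow> bool" where
  "is_sharp sm H Hs \<longleftrightarrow> (\<forall>\<xi>\<in>dual_sections sm. \<forall>\<eta>\<in>dual_sections sm. \<eta> (Hs \<xi>) = H \<xi> \<eta>)"

text \<open>[[H,H]](xi1,xi2,xi3), an element of Gamma(wedge^2 A \<otimes> A) evaluated on dual sections.\<close>
definition schouten_HH ::
  "('x::ab_group_add \<Rightarrow> 'x \<Rightarrow> 'x) \<Rightarrow> ('x \<Rightarrow> 'r::comm_ring_1 \<Rightarrow> 'r) \<Rightarrow> (('x \<Rightarrow> 'r) \<Rightarrow> 'x)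
     \<Rightarrow> ('x \<Rightarrow> 'r) \<Rightarrow> ('x \<Rightarrow> 'r) \<Rightarrow> ('x \<Rightarrow> 'r) \<Rightarrow> 'r" where
  "schouten_HH mult a Hs \<xi>1 \<xi>2 \<xi>3 =
     a (Hs \<xi>1) (\<xi>3 (Hs \<xi>2)) - a (Hs \<xi>2) (\<xi>3 (Hs \<xi>1))
     + \<xi>1 (mult (Hs \<xi>2) (Hs \<xi>3)) - \<xi>2 (mult (Hs \<xi>1) (Hs \<xi>3))
     - \<xi>3 (lsa_bracket mult (Hs \<xi>1) (Hs \<xi>2))"

end

theory Submission
  imports Defs
begin

text \<open>Substituting \<open>x\<^sub>i = H\<^sup>\<sharp>\<xi>\<^sub>i\<close> into \<open>\<delta>(H\<^sup>-\<^sup>1)\<close> reproduces \<open>\<lbrakk>H,H\<rbrakk>(\<xi>\<^sub>1,\<xi>\<^sub>2,\<xi>\<^sub>3)\<close> term by term: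
  \<open>H\<^sup>-\<^sup>1(H\<^sup>\<sharp>\<xi>, x) = \<langle>\<xi>, x\<rangle>\<close>, and symmetry of \<open>H\<close> lets the pairings
  \<open>\<langle>\<xi>\<^sub>j, H\<^sup>\<sharp>\<xi>\<^sub>3\<rangle>\<close> and \<open>H\<^sup>-\<^sup>1([H\<^sup>\<sharp>\<xi>\<^sub>1,H\<^sup>\<sharp>\<xi>\<^sub>2], H\<^sup>\<sharp>\<xi>\<^sub>3)\<close> be read with the arguments swapped.
  Since \<open>H\<^sup>\<sharp>\<close> is onto, vanishing for all dual sections is vanishing for all sections.\<close>

lemma sharp_pairing_sym:
  assumes "sym2_section sm H" and "is_sharp sm H Hs"
  shows "\<forall>\<xi>\<in>dual_sections sm. \<forall>\<eta>\<in>dual_sections sm. \<eta> (Hs \<xi>) = \<xi> (Hs \<eta>)"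
  using assms unfolding is_sharp_def sym2_section_def by metis

lemma schouten_HH_eq_lsa_delta2_inv:
  fixes Hs :: "('x::ab_group_add \<Rightarrow> 'r::comm_ring_1) \<Rightarrow> 'x"
  assumes bij: "bij_betw Hs S UNIV"
    and pairing_sym: "\<forall>\<xi>\<in>S. \<forall>\<eta>\<in>S. \<eta> (Hs \<xi>) = \<xi> (Hs \<eta>)"
    and S: "\<xi>1 \<in> S" "\<xi>2 \<in> S" "\<xi>3 \<in> S"
  shows "schouten_HH mult a Hs \<xi>1 \<xi>2 \<xi>3
       = lsa_delta2 mult a (inv_into S Hs) (Hs \<xi>1) (Hs \<xi>2) (Hs \<xi>3)"
proof -
  have inv_in: "inv_into S Hs x \<in> S" for x
    using bij by (metis UNIV_I bij_betw_imp_surj_on inv_into_into)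
  have Hs_inv: "Hs (inv_into S Hs x) = x" for x
    using bij by (metis UNIV_I bij_betw_imp_surj_on f_inv_into_f)
  have inv_Hs: "inv_into S Hs (Hs \<xi>) = \<xi>" if "\<xi> \<in> S" for \<xi>
    using bij that by (simp add: bij_betw_def)
  define z where "z = inv_into S Hs (lsa_bracket mult (Hs \<xi>1) (Hs \<xi>2))"
  have "z (Hs \<xi>3) = \<xi>3 (Hs z)"
    using pairing_sym S(3) inv_in by (simp add: z_def)
  also have "\<dots> = \<xi>3 (lsa_bracket mult (Hs \<xi>1) (Hs \<xi>2))"
    by (simp add: z_def Hs_inv)
  finally have bracket_term: "z (Hs \<xi>3) = \<xi>3 (lsa_bracket mult (Hs \<xi>1) (Hs \<xi>2))" .
  show ?thesis
    unfolding schouten_HH_def lsa_delta2_def z_def[symmetric]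
    using inv_Hs[OF S(1)] inv_Hs[OF S(2)] bracket_term pairing_sym S
    by simp
qed

theorem mainTheorem5:
  fixes sm :: "'r::{comm_ring_1,real_algebra_1} \<Rightarrow> 'x::ab_group_add \<Rightarrow> 'x"
    and mult :: "'x \<Rightarrow> 'x \<Rightarrow> 'x"
    and a :: "'x \<Rightarrow> 'r \<Rightarrow> 'r"
    and H :: "('x \<Rightarrow> 'r) \<Rightarrow> ('x \<Rightarrow> 'r) \<Rightarrow> 'r"
    and Hs :: "('x \<Rightarrow> 'r) \<Rightarrow> 'x"
  assumes lsa: "left_symmetric_algebroid sm mult a"
    and H_sym: "sym2_section sm H"
    and sharp: "is_sharp sm H Hs"
    and nondeg: "bij_betw Hs (dual_sections sm) UNIV"
  shows "(\<forall>\<xi>1\<in>dual_sections sm. \<forall>\<xi>2\<in>dual_sections sm. \<forall>\<xi>3\<in>dual_sections sm.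
            schouten_HH mult a Hs \<xi>1 \<xi>2 \<xi>3 = 0)
     \<longleftrightarrow> (\<forall>x1 x2 x3. lsa_delta2 mult a (\<lambda>x y. inv_into (dual_sections sm) Hs x y) x1 x2 x3 = 0)"
proof -
  let ?D = "dual_sections sm"
  have onto: "\<exists>\<xi>\<in>?D. x = Hs \<xi>" for x
    using nondeg by (metis UNIV_I bij_betw_imp_surj_on imageE)
  have "(\<forall>x1 x2 x3. lsa_delta2 mult a (inv_into ?D Hs) x1 x2 x3 = 0)
      \<longleftrightarrow> (\<forall>\<xi>1\<in>?D. \<forall>\<xi>2\<in>?D. \<forall>\<xi>3\<in>?D.
             lsa_delta2 mult a (inv_into ?D Hs) (Hs \<xi>1) (Hs \<xi>2) (Hs \<xi>3) = 0)"
    using onto by metis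
  also have "\<dots> \<longleftrightarrow> (\<forall>\<xi>1\<in>?D. \<forall>\<xi>2\<in>?D. \<forall>\<xi>3\<in>?D. schouten_HH mult a Hs \<xi>1 \<xi>2 \<xi>3 = 0)"
    using schouten_HH_eq_lsa_delta2_inv[OF nondeg sharp_pairing_sym[OF H_sym sharp]] by simp
  finally show ?thesis
    by simp
qed

end
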